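(* In the fermionic setting described in the context, if $g\in\mathrm{SO}_*(V)$ then the Gaussian vector $f_{T_g}\in\mathcal F(V)$ satisfies $$a_{gJg^{-1}}(gv)\,f_{T_g}=0\quad\text{for all }v\in V,$$ where $a_{gJg^{-1}}(gv)=\tfrac12\bigl(\psi(gv)+i\,\psi(gJv)\bigr)$.
   Context: Let $V$ be a real vector space of dimension $2m$ with a positive definite symmetric bilinear form $d$ and a real-linear $J$ with $J^2=-1$ and $d(Ju,Jv)=d(u,v)$. Put $s(u,v):=d(Ju,v)$; make $V$ a complex vector space by $(a+bi)v:=av+bJv$ with Hermitian inner product $\langle u|v\rangle:=d(u,v)+is(u,v)$ (antilinear in $u$). $A^t$ is the $d$-transpose. For $g\in\mathrm{SO}(V)$ let $p_g:=\tfrac12(g-JgJ)$, $q_g:=\tfrac12(g+JgJ)$; $\mathrm{SO}_*(V)$ is the set of $g\in\mathrm{SO}(V)$ with $p_g$ invertible, and for such $g$, $T_g:=q_gp_g^{-1}$ (antilinear and $d$-skew-symmetric). The fermionic Fock space $\mathcal F(V)$ is the exterior algebra $\Lambda(V)$ of the complex space $V$ with inner product $\langle u_1\wedge\dots\wedge u_k|v_1\wedge\dots\wedge v_l\rangle=\delta_{kl}\det[\langle u_i|v_j\rangle]$ and unit vacuum $\Omega\in\Lambda^0$. Creation: $a^\dagger(v)\xi:=v\wedge\xi$; annihilation: $a(v)(v_1\wedge\dots\wedge v_k):=\sum_j(-1)^{j-1}\langle v|v_j\rangle v_1\wedge\dots\widehat{v_j}\dots\wedge v_k$, $a(v)\Omega=0$;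 field $\psi(v):=a^\dagger(v)+a(v)$. For a complex structure $K$ on $V$, $a_K(w):=\tfrac12(\psi(w)+i\psi(Kw))$. For an antilinear $d$-skew-symmetric $T$ and an orthonormal basis $e_1,\dots,e_m$ of $V$, $H_T:=\sum_{i,j}\langle e_i|Te_j\rangle e_i\wedge e_j$ and the Gaussian is $f_T:=\sum_{0\le 2r\le m}\frac{1}{2^rr!}H_T^{\wedge r}$ (independent of the basis). *)

theory Defs
  imports "HOL-Analysis.Analysis"
begin

text \<open>The real space V is real^'n (with CARD('n) = 2m); d is the standard inner product.
  The complex structure J turns V into a complex space.\<close>

definition cmul :: "(real^'n \<Rightarrow> real^'n) \<Rightarrow> complex \<Rightarrow> real^'n \<Rightarrow> real^'n" where
  "cmul J z v = Re z *\<^sub>R v + Im z *\<^sub>R J v"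

definition hip :: "(real^'n \<Rightarrow> real^'n) \<Rightarrow> real^'n \<Rightarrow> real^'n \<Rightarrow> complex" where
  "hip J u v = Complex (u \<bullet> v) (J u \<bullet> v)"

definition is_complex_structure :: "(real^'n \<Rightarrow> real^'n) \<Rightarrow> bool" where
  "is_complex_structure J \<longleftrightarrow> linear J \<and> (\<forall>v. J (J v) = - v) \<and> (\<forall>u v. J u \<bullet> J v = u \<bullet> v)"

definition SO_space :: "(real^'n \<Rightarrow> real^'n) set" where
  "SO_space = {g. orthogonal_transformation g \<and> det (matrix g) = 1}"

definition pg :: "(real^'n \<Rightarrow> real^'n) \<Rightarrow> (real^'n \<Rightarrow> real^'n) \<Rightarrow> real^'n \<Rightarrow> real^'n" where
  "pg J g v = (1/2) *\<^sub>R (g v - J (g (J v)))"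

definition qg :: "(real^'n \<Rightarrow> real^'n) \<Rightarrow> (real^'n \<Rightarrow> real^'n) \<Rightarrow> real^'n \<Rightarrow> real^'n" where
  "qg J g v = (1/2) *\<^sub>R (g v + J (g (J v)))"

definition SO_star :: "(real^'n \<Rightarrow> real^'n) \<Rightarrow> (real^'n \<Rightarrow> real^'n) set" where
  "SO_star J = {g \<in> SO_space. bij (pg J g)}"

definition Tg :: "(real^'n \<Rightarrow> real^'n) \<Rightarrow> (real^'n \<Rightarrow> real^'n) \<Rightarrow> real^'n \<Rightarrow> real^'n" where
  "Tg J g = qg J g \<circ> inv (pg J g)"

text \<open>Model of the Fock space Lambda(V): an element xi = sum_k xi_k, xi_k in Lambda^k(V),
  is represented by the function on lists [u_1,...,u_k] of vectors given by
  xi_k(u_1,...,u_k), where v_1 \<and> ... \<and> v_k corresponds to (u_1..u_k) \<mapsto> det[<u_i|v_j>].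
  This identifies Lambda^k(V) with the alternating (complex-)antilinear k-forms on V.\<close>

type_synonym 'n fock = "(real^'n) list \<Rightarrow> complex"

definition fock_zero :: "'n fock" where
  "fock_zero = (\<lambda>us. 0)"

definition fock_add :: "'n fock \<Rightarrow> 'n fock \<Rightarrow> 'n fock" where
  "fock_add F G = (\<lambda>us. F us + G us)"

definition fock_smult :: "complex \<Rightarrow> 'n fock \<Rightarrow> 'n fock" where
  "fock_smult c F = (\<lambda>us. c * F us)"

definition vacuum :: "'n fock" where
  "vacuum = (\<lambda>us. if us = [] then 1 else 0)"

definition vec1 :: "(real^'n \<Rightarrow> real^'n) \<Rightarrow> real^'n \<Rightarrow> 'n fock" where
  "vec1 J w = (\<lambda>us. if length us = 1 then hip J (us ! 0) w else 0)"

text \<open>Exterior (wedge) product, with the determinant normalisation.\<close>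
definition fwedge :: "'n fock \<Rightarrow> 'n fock \<Rightarrow> 'n fock" where
  "fwedge F G = (\<lambda>us. let n = length us in
     \<Sum>k\<in>{0..n}. complex_of_real (1 / (fact k * fact (n - k))) *
       (\<Sum>\<sigma>\<in>{\<sigma>. \<sigma> permutes {..<n}}.
          of_int (sign \<sigma>) * F (take k (permute_list \<sigma> us)) * G (drop k (permute_list \<sigma> us))))"

definition creation :: "(real^'n \<Rightarrow> real^'n) \<Rightarrow> real^'n \<Rightarrow> 'n fock \<Rightarrow> 'n fock" where
  "creation J v F = fwedge (vec1 J v) F"

text \<open>Annihilation a(v): in the form model, a(v)(v_1\<and>...\<and>v_k) =
  sum_j (-1)^(j-1) <v|v_j> v_1..^v_j..v_k  is exactly  (u_1..u_{k-1}) \<mapsto> xi(v,u_1,..,u_{k-1})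
  (Laplace expansion along the first row); a(v) Omega = 0.\<close>
definition annihilation :: "real^'n \<Rightarrow> 'n fock \<Rightarrow> 'n fock" where
  "annihilation v F = (\<lambda>us. F (v # us))"

definition field_op :: "(real^'n \<Rightarrow> real^'n) \<Rightarrow> real^'n \<Rightarrow> 'n fock \<Rightarrow> 'n fock" where
  "field_op J v F = fock_add (creation J v F) (annihilation v F)"

definition aK :: "(real^'n \<Rightarrow> real^'n) \<Rightarrow> (real^'n \<Rightarrow> real^'n) \<Rightarrow> real^'n \<Rightarrow> 'n fock \<Rightarrow> 'n fock" where
  "aK J K w F = fock_smult (1/2) (fock_add (field_op J w F) (fock_smult \<i> (field_op J (K w) F)))"

definition orthonormal_cbasis :: "(real^'n \<Rightarrow> real^'n) \<Rightarrow> nat \<Rightarrow> (nat \<Rightarrow> real^'n) \<Rightarrow> bool" where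
  "orthonormal_cbasis J m e \<longleftrightarrow>
     (\<forall>i<m. \<forall>j<m. hip J (e i) (e j) = (if i = j then 1 else 0)) \<and>
     (\<forall>v. \<exists>c. v = (\<Sum>i<m. cmul J (c i) (e i)))"

definition H_T :: "(real^'n \<Rightarrow> real^'n) \<Rightarrow> nat \<Rightarrow> (nat \<Rightarrow> real^'n) \<Rightarrow> (real^'n \<Rightarrow> real^'n) \<Rightarrow> 'n fock" where
  "H_T J m e T = (\<lambda>us. \<Sum>i<m. \<Sum>j<m. hip J (e i) (T (e j)) * fwedge (vec1 J (e i)) (vec1 J (e j)) us)"

fun fwedge_pow :: "'n fock \<Rightarrow> nat \<Rightarrow> 'n fock" where
  "fwedge_pow H 0 = vacuum"
| "fwedge_pow H (Suc r) = fwedge H (fwedge_pow H r)"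

definition gaussian :: "(real^'n \<Rightarrow> real^'n) \<Rightarrow> nat \<Rightarrow> (nat \<Rightarrow> real^'n) \<Rightarrow> (real^'n \<Rightarrow> real^'n) \<Rightarrow> 'n fock" where
  "gaussian J m e T = (\<lambda>us. \<Sum>r\<in>{r. 2 * r \<le> m}.
      complex_of_real (1 / (2 ^ r * fact r)) * fwedge_pow (H_T J m e T) r us)"

end

theory Submission
  imports Defs
begin

text \<open>Elements of the Fock space are alternating forms, and the annihilator a(u) inserts u as
  first argument; it is an odd derivation of the wedge product. For the degree two element H_T this gives
  a(u) H_T = -2 T u, hence a(u) H_T^(r+1) = -2 (r+1) (T u) wedge H_T^r, and against the
  coefficients 1/(2^r r!) of the Gaussian the sum telescopes to a(u) f_T = -(T u) wedge f_T. The
  truncation of the series costs nothing: H_T^r with 2r > m is an alternating form, antilinear in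
  each argument, on more than m vectors of the complex m-dimensional space V, so it vanishes.
  Finally, a_(gJg^-1)(gv) splits into creation of g v + J g J v = 2 q_g v and annihilation by
  g v - J g J v = 2 p_g v, and T_g p_g = q_g makes the two contributions cancel.\<close>

section \<open>Shifted and insertion permutations\<close>

definition shift_perm :: "(nat \<Rightarrow> nat) \<Rightarrow> nat \<Rightarrow> nat" where
  "shift_perm q i = (case i of 0 \<Rightarrow> 0 | Suc j \<Rightarrow> Suc (q j))"

lemma shift_perm_id: "shift_perm id = id"
  by (auto simp: shift_perm_def fun_eq_iff split: nat.split)

lemma shift_perm_comp: "shift_perm (p \<circ> q) = shift_perm p \<circ> shift_perm q"
  by (auto simp: shift_perm_def fun_eq_iff split: nat.split)

lemma shift_perm_transpose:
  "shift_perm (Transposition.transpose a b) = Transposition.transpose (Suc a) (Suc b)"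
  by (auto simp: shift_perm_def fun_eq_iff Transposition.transpose_def split: nat.split)

lemma swapidseq_shift_perm: "swapidseq n p \<Longrightarrow> swapidseq n (shift_perm p)"
proof (induction rule: swapidseq.induct)
  case id
  show ?case by (metis shift_perm_id swapidseq.id)
next
  case (comp_Suc n p a b)
  then show ?case
    unfolding shift_perm_comp shift_perm_transpose by (intro swapidseq.comp_Suc) auto
qed

lemma sign_shift_perm:
  assumes "permutation p"
  shows "sign (shift_perm p) = sign p"
proof -
  obtain n where n: "swapidseq n p" using assms unfolding permutation_def by blast
  have "evenperm p = even n" "evenperm (shift_perm p) = even n"
    using evenperm_unique n swapidseq_shift_perm by blast+
  then show ?thesis by (simp add: sign_def)
qed

lemma shift_perm_permutes:
  assumes "q permutes {..<n}"
  shows "shift_perm q permutes {..<Suc n}"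
  unfolding permutes_def
proof (intro conjI allI impI)
  fix x assume "x \<notin> {..<Suc n}"
  then obtain j where x: "x = Suc j" "j \<notin> {..<n}"
    by (metis lessThan_iff not_less_eq not0_implies_Suc zero_less_Suc)
  then show "shift_perm q x = x"
    using permutes_not_in[OF assms x(2)] by (simp add: shift_perm_def)
next
  fix y
  have "shift_perm q \<circ> shift_perm (inv q) = id" "shift_perm (inv q) \<circ> shift_perm q = id"
    using permutes_inv_o[OF assms] by (simp_all flip: shift_perm_comp add: shift_perm_id)
  then have "bij (shift_perm q)" using o_bij by blast
  then show "\<exists>!x. shift_perm q x = y" unfolding bij_iff by blast
qed

lemma permute_list_shift_perm:
  assumes "q permutes {..<length us}"
  shows "permute_list (shift_perm q) (u # us) = u # permute_list q us"
proof (rule nth_equalityI)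
  fix i assume i: "i < length (permute_list (shift_perm q) (u # us))"
  then have "permute_list (shift_perm q) (u # us) ! i = (u # us) ! shift_perm q i"
    using shift_perm_permutes[OF assms] by (intro permute_list_nth) auto
  then show "permute_list (shift_perm q) (u # us) ! i = (u # permute_list q us) ! i"
    using assms i by (cases i) (auto simp: permute_list_nth shift_perm_def)
qed simp

definition insert_perm :: "nat \<Rightarrow> nat \<Rightarrow> nat" where
  "insert_perm b i = (if i < b then Suc i else if i = b then 0 else i)"

lemma insert_perm_0: "insert_perm 0 = id"
  by (auto simp: insert_perm_def fun_eq_iff)

lemma insert_perm_Suc: "insert_perm (Suc b) = insert_perm b \<circ> Transposition.transpose b (Suc b)"
  by (auto simp: insert_perm_def fun_eq_iff Transposition.transpose_def)

lemma swapidseq_insert_perm: "swapidseq b (insert_perm b)"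
proof (induction b)
  case 0
  show ?case unfolding insert_perm_0 by (rule swapidseq.id)
next
  case (Suc b)
  have "swapidseq (b + 1) (insert_perm b \<circ> Transposition.transpose b (Suc b))"
    using swapidseq_comp_add[OF Suc swapidseq_swap[of b "Suc b"]] by simp
  then show ?case unfolding insert_perm_Suc by (simp only: Suc_eq_plus1)
qed

lemma permutation_insert_perm: "permutation (insert_perm b)"
  using swapidseq_insert_perm permutation_def by blast

lemma sign_insert_perm: "sign (insert_perm b) = (-1) ^ b"
proof -
  have "evenperm (insert_perm b) = even b" using evenperm_unique swapidseq_insert_perm by blast
  then show ?thesis by (simp add: sign_def)
qed

lemma insert_perm_permutes: "b < n \<Longrightarrow> insert_perm b permutes {..<n}"
proof (induction b)
  case 0
  show ?case unfolding insert_perm_0 by (rule permutes_id)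
next
  case (Suc b)
  then show ?case unfolding insert_perm_Suc by (intro permutes_compose permutes_swap_id) auto
qed

lemma permute_list_insert_perm:
  assumes "b \<le> length ys"
  shows "permute_list (insert_perm b) (x # ys) = take b ys @ x # drop b ys"
proof (rule nth_equalityI)
  fix i assume i: "i < length (permute_list (insert_perm b) (x # ys))"
  have nth: "permute_list (insert_perm b) (x # ys) ! i = (x # ys) ! insert_perm b i"
    using i assms by (intro permute_list_nth insert_perm_permutes) auto
  consider "i \<le> b" | k where "i = Suc (b + k)" by (metis less_imp_Suc_add not_le)
  then show "permute_list (insert_perm b) (x # ys) ! i = (take b ys @ x # drop b ys) ! i"
    unfolding nth by cases (use i assms in \<open>auto simp: insert_perm_def nth_append\<close>)
qed (use assms in simp)

lemma bij_betw_shift_insert_perm: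
  "bij_betw (\<lambda>(b, q). shift_perm q \<circ> insert_perm b)
     ({..<Suc n} \<times> {q. q permutes {..<n}}) {\<sigma>. \<sigma> permutes {..<Suc n}}"
proof -
  let ?f = "\<lambda>(b, q). shift_perm q \<circ> insert_perm b"
  let ?A = "{..<Suc n} \<times> {q. q permutes {..<n}}"
  have perm: "shift_perm q \<circ> insert_perm b permutes {..<Suc n}"
    if "b < Suc n" "q permutes {..<n}" for b q
    using that by (intro permutes_compose shift_perm_permutes insert_perm_permutes)
  have inj: "inj_on ?f ?A"
  proof (rule inj_onI)
    fix x y assume "x \<in> ?A" "y \<in> ?A" and fxy: "?f x = ?f y"
    obtain b q b' q' where xy: "x = (b, q)" "y = (b', q')" by fastforce
    have bq: "(b', q') \<in> ?A" using \<open>y \<in> ?A\<close> xy by simp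
    have e: "shift_perm q \<circ> insert_perm b = shift_perm q' \<circ> insert_perm b'" using fxy xy by simp
    have zero: "(shift_perm p \<circ> insert_perm c) c = 0" for p c
      by (simp add: insert_perm_def shift_perm_def)
    have "(shift_perm q' \<circ> insert_perm b') b = (shift_perm q' \<circ> insert_perm b') b'"
      using zero[of q b] zero[of q' b'] e by simp
    moreover have "inj (shift_perm q' \<circ> insert_perm b')"
      using bq perm permutes_inj by blast
    ultimately have bb: "b = b'" by (metis injD)
    have "surj (insert_perm b)" using permutes_surj insert_perm_permutes[of b "Suc b"] by simp
    then have "shift_perm q = shift_perm q'" using e bb by (metis comp_assoc comp_id surj_iff)
    then have "q = q'" by (metis shift_perm_def nat.case(2) nat.inject ext)
    with bb xy show "x = y" by simp
  qed
  have "card (?f ` ?A) = card {\<sigma>. \<sigma> permutes {..<Suc n}}"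
    using card_image[OF inj] by (simp add: card_cartesian_product card_permutations)
  moreover have "?f ` ?A \<subseteq> {\<sigma>. \<sigma> permutes {..<Suc n}}" using perm by auto
  ultimately have "?f ` ?A = {\<sigma>. \<sigma> permutes {..<Suc n}}"
    by (intro card_subset_eq) (auto simp: finite_permutations)
  with inj show ?thesis unfolding bij_betw_def by blast
qed

lemma sum_permutes_Suc:
  "(\<Sum>\<sigma>\<in>{\<sigma>. \<sigma> permutes {..<Suc n}}. h \<sigma>) =
   (\<Sum>b<Suc n. \<Sum>q\<in>{q. q permutes {..<n}}. h (shift_perm q \<circ> insert_perm b))"
  by (simp add: sum.reindex_bij_betw[OF bij_betw_shift_insert_perm, symmetric]
      sum.cartesian_product case_prod_unfold)

lemma sign_shift_insert_perm:
  assumes "q permutes {..<n}"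
  shows "sign (shift_perm q \<circ> insert_perm b) = sign q * (-1) ^ b"
proof -
  have "permutation q" "permutation (shift_perm q)"
    using assms shift_perm_permutes permutes_imp_permutation by blast+
  then show ?thesis
    by (simp add: sign_compose permutation_insert_perm sign_shift_perm sign_insert_perm)
qed

lemma permute_list_shift_insert_perm:
  assumes "q permutes {..<length us}" "b \<le> length us"
  shows "permute_list (shift_perm q \<circ> insert_perm b) (u # us) =
    take b (permute_list q us) @ u # drop b (permute_list q us)"
proof -
  have "permute_list (shift_perm q \<circ> insert_perm b) (u # us) =
      permute_list (insert_perm b) (permute_list (shift_perm q) (u # us))"
    using assms by (intro permute_list_compose insert_perm_permutes) auto
  then show ?thesis using assms by (simp add: permute_list_shift_perm permute_list_insert_perm)
qed

section \<open>Alternating forms and the wedge product\<close>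

definition alternating :: "('a list \<Rightarrow> complex) \<Rightarrow> bool" where
  "alternating F \<longleftrightarrow>
     (\<forall>ws \<sigma>. \<sigma> permutes {..<length ws} \<longrightarrow> F (permute_list \<sigma> ws) = of_int (sign \<sigma>) * F ws)"

definition homogeneous :: "nat \<Rightarrow> ('a list \<Rightarrow> complex) \<Rightarrow> bool" where
  "homogeneous k F \<longleftrightarrow> (\<forall>ws. length ws \<noteq> k \<longrightarrow> F ws = 0)"

lemma alternating_insert:
  assumes "alternating F" "b \<le> length ys"
  shows "F (take b ys @ x # drop b ys) = (-1) ^ b * F (x # ys)"
proof -
  have "insert_perm b permutes {..<length (x # ys)}"
    using assms(2) by (intro insert_perm_permutes) auto
  then have "F (permute_list (insert_perm b) (x # ys)) = of_int (sign (insert_perm b)) * F (x # ys)"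
    using assms(1) unfolding alternating_def by blast
  then show ?thesis using assms(2) by (simp add: permute_list_insert_perm sign_insert_perm)
qed

lemma alternating_repeated:
  assumes "alternating F" "x \<in> set ys"
  shows "F (x # ys) = 0"
proof -
  obtain p where p: "p < length ys" "ys ! p = x" using assms(2) by (meson in_set_conv_nth)
  let ?t = "Transposition.transpose 0 (Suc p)"
  have t: "?t permutes {..<length (x # ys)}" using p by (intro permutes_swap_id) auto
  have "permute_list ?t (x # ys) = x # ys"
  proof (rule nth_equalityI)
    fix i assume "i < length (permute_list ?t (x # ys))"
    then show "permute_list ?t (x # ys) ! i = (x # ys) ! i"
      using p t by (auto simp: permute_list_nth Transposition.transpose_def)
  qed simp
  moreover have "F (permute_list ?t (x # ys)) = of_int (sign ?t) * F (x # ys)"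
    using assms(1) t unfolding alternating_def by blast
  ultimately have "F (x # ys) = - F (x # ys)" by (simp add: sign_swap_id)
  then show ?thesis by simp
qed

lemma annihilation_apply: "annihilation u F us = F (u # us)"
  by (simp add: annihilation_def)

lemma alternating_annihilation:
  fixes F :: "('n::finite) fock"
  shows "alternating F \<Longrightarrow> alternating (annihilation u F)"
  unfolding alternating_def annihilation_def
proof (intro allI impI)
  fix ws :: "(real^'n) list" and \<sigma> :: "nat \<Rightarrow> nat"
  assume F: "\<forall>ws \<sigma>. \<sigma> permutes {..<length ws} \<longrightarrow> F (permute_list \<sigma> ws) = of_int (sign \<sigma>) * F ws"
    and \<sigma>: "\<sigma> permutes {..<length ws}"
  have "F (permute_list (shift_perm \<sigma>) (u # ws)) = of_int (sign (shift_perm \<sigma>)) * F (u # ws)"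
    using F shift_perm_permutes[OF \<sigma>] by simp
  then show "F (u # permute_list \<sigma> ws) = of_int (sign \<sigma>) * F (u # ws)"
    using \<sigma> permutes_imp_permutation[OF _ \<sigma>] by (simp add: permute_list_shift_perm sign_shift_perm)
qed

lemma homogeneous_annihilation: "homogeneous (Suc k) F \<Longrightarrow> homogeneous k (annihilation u F)"
  unfolding homogeneous_def annihilation_def by simp

lemma homogeneous_0_annihilation: "homogeneous 0 F \<Longrightarrow> annihilation u F = (\<lambda>ws. 0)"
  unfolding homogeneous_def annihilation_def by simp

lemma homogeneous_vec1: "homogeneous 1 (vec1 J w)"
  unfolding homogeneous_def vec1_def by simp

lemma alternating_vec1:
  fixes w :: "real^'n"
  shows "alternating (vec1 J w)"
  unfolding alternating_def
proof (intro allI impI)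
  fix ws :: "(real^'n) list" and \<sigma> assume \<sigma>: "\<sigma> permutes {..<length ws}"
  show "vec1 J w (permute_list \<sigma> ws) = of_int (sign \<sigma>) * vec1 J w ws"
  proof (cases "length ws = 1")
    case True
    then have "\<sigma> = id" using \<sigma> by (simp add: lessThan_Suc)
    then show ?thesis by simp
  qed (simp add: vec1_def)
qed

lemma homogeneous_vacuum: "homogeneous 0 vacuum"
  unfolding homogeneous_def vacuum_def by simp

lemma alternating_vacuum: "alternating (vacuum :: ('n::finite) fock)"
  unfolding alternating_def
proof (intro allI impI)
  fix ws :: "(real^'n) list" and \<sigma> assume \<sigma>: "\<sigma> permutes {..<length ws}"
  show "vacuum (permute_list \<sigma> ws) = of_int (sign \<sigma>) * vacuum ws"
  proof (cases "ws = []")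
    case True
    then show ?thesis using \<sigma> by simp
  next
    case False
    then have "permute_list \<sigma> ws \<noteq> []" by (metis length_0_conv length_permute_list)
    with False show ?thesis by (simp add: vacuum_def)
  qed
qed

definition wedge_coeff :: "nat \<Rightarrow> nat \<Rightarrow> complex" where
  "wedge_coeff k l = complex_of_real (1 / (fact k * fact l))"

definition wedge_term :: "nat \<Rightarrow> ('a list \<Rightarrow> complex) \<Rightarrow> ('a list \<Rightarrow> complex) \<Rightarrow> 'a list \<Rightarrow> complex" where
  "wedge_term k F G us = (\<Sum>\<sigma>\<in>{\<sigma>. \<sigma> permutes {..<length us}}.
     of_int (sign \<sigma>) * F (take k (permute_list \<sigma> us)) * G (drop k (permute_list \<sigma> us)))"

lemma fwedge_eq_sum_wedge_term:
  "fwedge F G us = (\<Sum>k\<in>{0..length us}. wedge_coeff k (length us - k) * wedge_term k F G us)"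
  by (simp add: fwedge_def wedge_coeff_def wedge_term_def Let_def)

lemma wedge_coeff_Suc_left: "wedge_coeff (Suc k) l * of_nat (Suc k) = wedge_coeff k l"
proof -
  have "1 / (fact (Suc k) * fact l) * real (Suc k) = 1 / (fact k * fact l)"
    by (simp del: of_nat_Suc)
  then show ?thesis by (metis wedge_coeff_def of_real_mult of_real_of_nat_eq)
qed

lemma wedge_coeff_Suc_right: "wedge_coeff k (Suc l) * of_nat (Suc l) = wedge_coeff k l"
proof -
  have "1 / (fact k * fact (Suc l)) * real (Suc l) = 1 / (fact k * fact l)"
    by (simp del: of_nat_Suc)
  then show ?thesis by (metis wedge_coeff_def of_real_mult of_real_of_nat_eq)
qed

lemma wedge_term_permute_list:
  assumes \<pi>: "\<pi> permutes {..<length ws}"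
  shows "wedge_term k F G (permute_list \<pi> ws) = of_int (sign \<pi>) * wedge_term k F G ws"
proof -
  let ?P = "{\<sigma>. \<sigma> permutes {..<length ws}}"
  define t where
    "t \<sigma> = of_int (sign \<sigma>) * F (take k (permute_list \<sigma> ws)) * G (drop k (permute_list \<sigma> ws))" for \<sigma>
  have "of_int (sign \<sigma>) * F (take k (permute_list \<sigma> (permute_list \<pi> ws))) *
      G (drop k (permute_list \<sigma> (permute_list \<pi> ws))) = of_int (sign \<pi>) * t (\<pi> \<circ> \<sigma>)"
    if \<sigma>: "\<sigma> \<in> ?P" for \<sigma>
  proof -
    have "sign (\<pi> \<circ> \<sigma>) = sign \<pi> * sign \<sigma>"
      using \<sigma> \<pi> by (intro sign_compose permutes_imp_permutation) auto
    then have "of_int (sign \<pi>) * of_int (sign (\<pi> \<circ> \<sigma>)) = (of_int (sign \<sigma>) :: complex)"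
      by (metis mult.assoc mult_1 of_int_mult sign_idempotent)
    moreover have "permute_list (\<pi> \<circ> \<sigma>) ws = permute_list \<sigma> (permute_list \<pi> ws)"
      using \<sigma> by (intro permute_list_compose) simp
    ultimately show ?thesis by (simp add: t_def mult.assoc)
  qed
  then have "wedge_term k F G (permute_list \<pi> ws) = of_int (sign \<pi>) * (\<Sum>\<sigma>\<in>?P. t (\<pi> \<circ> \<sigma>))"
    by (simp add: wedge_term_def sum_distrib_left)
  also have "(\<Sum>\<sigma>\<in>?P. t (\<pi> \<circ> \<sigma>)) = wedge_term k F G ws"
    using setum_permutations_compose_left[OF \<pi>, of t] by (simp add: wedge_term_def t_def)
  finally show ?thesis .
qed

lemma alternating_fwedge: "alternating (fwedge F G)"
  unfolding alternating_def fwedge_eq_sum_wedge_term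
  by (simp add: wedge_term_permute_list sum_distrib_left mult.left_commute)

lemma fwedge_homogeneous_left:
  assumes "homogeneous k F"
  shows "fwedge F G us =
    (if k \<le> length us then wedge_coeff k (length us - k) * wedge_term k F G us else 0)"
proof -
  have "wedge_term j F G us = 0" if "j \<le> length us" "j \<noteq> k" for j
    using that assms by (simp add: wedge_term_def homogeneous_def)
  then have "fwedge F G us = (\<Sum>j\<in>{0..length us}.
      if j = k then wedge_coeff k (length us - k) * wedge_term k F G us else 0)"
    unfolding fwedge_eq_sum_wedge_term by (intro sum.cong) auto
  then show ?thesis by simp
qed

lemma fwedge_homogeneous_right:
  assumes "homogeneous l G"
  shows "fwedge F G us = (if l \<le> length us
    then wedge_coeff (length us - l) l * wedge_term (length us - l) F G us else 0)"
proof -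
  have "wedge_term j F G us = 0" if "j \<le> length us" "j \<noteq> length us - l \<or> \<not> l \<le> length us" for j
    using that assms by (auto simp: wedge_term_def homogeneous_def)
  then have "fwedge F G us = (\<Sum>j\<in>{0..length us}. if j = length us - l \<and> l \<le> length us
      then wedge_coeff (length us - l) l * wedge_term (length us - l) F G us else 0)"
    unfolding fwedge_eq_sum_wedge_term by (intro sum.cong) auto
  then show ?thesis by simp
qed

lemma sum_sign_squared:
  "(\<Sum>\<sigma>\<in>{\<sigma>. \<sigma> permutes {..<n}}. of_int (sign \<sigma>) * of_int (sign \<sigma>) * c) = of_nat (fact n) * (c :: complex)"
proof -
  have "(\<Sum>\<sigma>\<in>{\<sigma>. \<sigma> permutes {..<n}}. of_int (sign \<sigma>) * of_int (sign \<sigma>) * c) =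
      (\<Sum>\<sigma>\<in>{\<sigma>. \<sigma> permutes {..<n}}. c)"
    by (intro sum.cong refl) (metis mult_1 of_int_1 of_int_mult sign_idempotent)
  then show ?thesis by (simp add: card_permutations)
qed

lemma fwedge_degree_0_left:
  assumes "homogeneous 0 K" "alternating G"
  shows "fwedge K G us = K [] * G us"
proof -
  have "fwedge K G us = wedge_coeff 0 (length us) *
      (\<Sum>\<sigma>\<in>{\<sigma>. \<sigma> permutes {..<length us}}. of_int (sign \<sigma>) * of_int (sign \<sigma>) * (K [] * G us))"
    using assms unfolding fwedge_homogeneous_left[OF assms(1)] wedge_term_def alternating_def
    by (simp add: mult_ac)
  then show ?thesis by (simp add: sum_sign_squared wedge_coeff_def)
qed

lemma fwedge_degree_0_right:
  assumes "homogeneous 0 K" "alternating F"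
  shows "fwedge F K us = F us * K []"
proof -
  have "fwedge F K us = wedge_coeff (length us) 0 *
      (\<Sum>\<sigma>\<in>{\<sigma>. \<sigma> permutes {..<length us}}. of_int (sign \<sigma>) * of_int (sign \<sigma>) * (F us * K []))"
    using assms unfolding fwedge_homogeneous_right[OF assms(1)] wedge_term_def alternating_def
    by (simp add: mult_ac)
  then show ?thesis by (simp add: sum_sign_squared wedge_coeff_def)
qed

lemma fwedge_lincomb_left:
  "fwedge (\<lambda>ws. a * F1 ws + b * F2 ws) G us = a * fwedge F1 G us + b * fwedge F2 G us"
  by (simp add: fwedge_eq_sum_wedge_term wedge_term_def algebra_simps sum.distrib sum_distrib_left)

lemma fwedge_lincomb_right:
  "fwedge F (\<lambda>ws. a * G1 ws + b * G2 ws) us = a * fwedge F G1 us + b * fwedge F G2 us"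
  by (simp add: fwedge_eq_sum_wedge_term wedge_term_def algebra_simps sum.distrib sum_distrib_left)

lemma fwedge_scale_left: "fwedge (\<lambda>ws. c * F ws) G us = c * fwedge F G us"
  using fwedge_lincomb_left[of c F 0 F G us] by simp

lemma fwedge_scale_right: "fwedge F (\<lambda>ws. c * G ws) us = c * fwedge F G us"
  using fwedge_lincomb_right[of F c G 0 G us] by simp

lemma fwedge_zero_left: "fwedge (\<lambda>ws. 0) G us = 0"
  using fwedge_scale_left[of 0 G G us] by simp

lemma fwedge_zero_right: "fwedge F (\<lambda>ws. 0) us = 0"
  using fwedge_scale_right[of F 0 F us] by simp

lemma fwedge_sum_right: "fwedge F (\<lambda>ws. \<Sum>i\<in>I. G i ws) us = (\<Sum>i\<in>I. fwedge F (G i) us)"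
  by (simp add: fwedge_eq_sum_wedge_term wedge_term_def sum_distrib_left sum_distrib_right
      sum.swap[of _ I] mult_ac)

lemma homogeneous_fwedge:
  assumes "homogeneous k F" "homogeneous l G"
  shows "homogeneous (k + l) (fwedge F G)"
  using assms unfolding homogeneous_def by (auto simp: fwedge_homogeneous_left[OF assms(1)] wedge_term_def)

section \<open>The graded Leibniz rule\<close>

lemma take_drop_insert_before:
  assumes "b < k" "b \<le> length xs"
  shows "take k (take b xs @ u # drop b xs) = take b (take (k - 1) xs) @ u # drop b (take (k - 1) xs)"
    and "drop k (take b xs @ u # drop b xs) = drop (k - 1) xs"
proof -
  have kb: "k - b = Suc (k - 1 - b)" using assms(1) by simp
  show "take k (take b xs @ u # drop b xs) = take b (take (k - 1) xs) @ u # drop b (take (k - 1) xs)"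
    using assms by (simp add: kb drop_take min_absorb1)
  show "drop k (take b xs @ u # drop b xs) = drop (k - 1) xs"
    using assms by (simp add: kb)
qed

lemma take_drop_insert_after:
  assumes "k \<le> b" "b \<le> length xs"
  shows "take k (take b xs @ u # drop b xs) = take k xs"
    and "drop k (take b xs @ u # drop b xs) = take (b - k) (drop k xs) @ u # drop (b - k) (drop k xs)"
  using assms by (simp_all add: min_def drop_take)

lemma wedge_summand_shift_insert_perm:
  assumes F: "alternating F" and G: "alternating G"
    and q: "q permutes {..<length us}" and b: "b \<le> length us"
  defines "\<sigma> \<equiv> shift_perm q \<circ> insert_perm b" and "Q \<equiv> permute_list q us"
  shows "of_int (sign \<sigma>) * F (take k (permute_list \<sigma> (u # us))) *
      G (drop k (permute_list \<sigma> (u # us))) =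
    (if b < k then of_int (sign q) * F (u # take (k - 1) Q) * G (drop (k - 1) Q)
     else (-1) ^ k * (of_int (sign q) * F (take k Q) * G (u # drop k Q)))"
proof -
  have bQ: "b \<le> length Q" using b by (simp add: Q_def)
  have \<sigma>: "permute_list \<sigma> (u # us) = take b Q @ u # drop b Q"
    unfolding \<sigma>_def Q_def using q b by (rule permute_list_shift_insert_perm)
  have sign: "of_int (sign \<sigma>) = (of_int (sign q) :: complex) * (-1) ^ b"
    unfolding \<sigma>_def using q by (simp add: sign_shift_insert_perm)
  have sq: "(-1) ^ j * ((-1) ^ j * z) = (z :: complex)" for j z
    by (simp flip: power_add mult.assoc)
  show ?thesis
  proof (cases "b < k")
    case True
    have Fk: "F (take k (permute_list \<sigma> (u # us))) = (-1) ^ b * F (u # take (k - 1) Q)"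
      unfolding \<sigma> take_drop_insert_before(1)[OF True bQ]
      using True bQ by (intro alternating_insert[OF F]) auto
    have Gk: "drop k (permute_list \<sigma> (u # us)) = drop (k - 1) Q"
      unfolding \<sigma> using True bQ by (rule take_drop_insert_before(2))
    show ?thesis using True unfolding Fk Gk sign by (simp add: mult_ac sq)
  next
    case False
    then have kb: "k \<le> b" by simp
    have Fk: "take k (permute_list \<sigma> (u # us)) = take k Q"
      unfolding \<sigma> using kb bQ by (rule take_drop_insert_after(1))
    have Gk: "G (drop k (permute_list \<sigma> (u # us))) = (-1) ^ (b - k) * G (u # drop k Q)"
      unfolding \<sigma> take_drop_insert_after(2)[OF kb bQ]
      using kb bQ by (intro alternating_insert[OF G]) auto
    have "((-1) ^ b :: complex) = (-1) ^ k * (-1) ^ (b - k)"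
      using kb by (simp flip: power_add)
    then show ?thesis using False unfolding Fk Gk sign by (simp add: mult_ac sq)
  qed
qed

lemma sum_lessThan_if_less:
  assumes "k \<le> n"
  shows "(\<Sum>b<n. if b < k then x else y) = of_nat k * x + of_nat (n - k) * (y :: complex)"
proof -
  have "(\<Sum>b<n. if b < k then x else y) =
      (\<Sum>b\<in>{..<k}. if b < k then x else y) + (\<Sum>b\<in>{k..<n}. if b < k then x else y)"
    using assms by (subst sum.union_disjoint[symmetric]) (auto intro: sum.cong)
  also have "\<dots> = (\<Sum>b\<in>{..<k}. x) + (\<Sum>b\<in>{k..<n}. y)" by simp
  finally show ?thesis by simp
qed

lemma wedge_term_Cons:
  assumes "alternating F" "alternating G" "k \<le> Suc (length us)"
  shows "wedge_term k F G (u # us) =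
    of_nat k * wedge_term (k - 1) (annihilation u F) G us +
    of_nat (Suc (length us) - k) * ((-1) ^ k * wedge_term k F (annihilation u G) us)"
proof -
  let ?P = "{q. q permutes {..<length us}}"
  have "wedge_term k F G (u # us) = (\<Sum>b<Suc (length us). \<Sum>q\<in>?P.
      if b < k then of_int (sign q) * F (u # take (k - 1) (permute_list q us)) * G (drop (k - 1) (permute_list q us))
      else (-1) ^ k * (of_int (sign q) * F (take k (permute_list q us)) * G (u # drop k (permute_list q us))))"
    unfolding wedge_term_def length_Cons sum_permutes_Suc
    using assms(1,2) by (intro sum.cong refl) (simp add: wedge_summand_shift_insert_perm)
  also have "\<dots> = (\<Sum>b<Suc (length us). if b < k
      then wedge_term (k - 1) (annihilation u F) G us
      else (-1) ^ k * wedge_term k F (annihilation u G) us)"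
    by (intro sum.cong refl) (simp add: wedge_term_def annihilation_def sum_distrib_left)
  also have "\<dots> = of_nat k * wedge_term (k - 1) (annihilation u F) G us +
      of_nat (Suc (length us) - k) * ((-1) ^ k * wedge_term k F (annihilation u G) us)"
    using assms(3) by (rule sum_lessThan_if_less)
  finally show ?thesis .
qed

lemma fwedge_Cons:
  fixes F G :: "('n::finite) fock"
  assumes F: "homogeneous k F" "alternating F" and G: "alternating G"
  shows "fwedge F G (u # us) =
    fwedge (annihilation u F) G us + (-1) ^ k * fwedge F (annihilation u G) us"
proof (cases "k \<le> Suc (length us)")
  case False
  then obtain k' where k: "k = Suc k'" "length us < k'" by (cases k) auto
  then show ?thesis
    using False by (simp add: fwedge_homogeneous_left[OF F(1)]
        fwedge_homogeneous_left[OF homogeneous_annihilation[OF F(1)[unfolded k(1)]]])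
next
  case True
  let ?n = "length us" and ?c = "wedge_coeff k (Suc (length us) - k)"
  have left: "fwedge (annihilation u F) G us =
      ?c * of_nat k * wedge_term (k - 1) (annihilation u F) G us"
  proof (cases k)
    case 0
    then show ?thesis using F(1) by (simp add: homogeneous_0_annihilation fwedge_zero_left)
  next
    case (Suc k')
    then have "?c * of_nat k = wedge_coeff k' (?n - k')"
      using True wedge_coeff_Suc_left[of k' "?n - k'"] by simp
    then show ?thesis
      using True Suc
      by (simp add: fwedge_homogeneous_left[OF homogeneous_annihilation[OF F(1)[unfolded Suc]]])
  qed
  have right: "fwedge F (annihilation u G) us =
      ?c * of_nat (Suc ?n - k) * wedge_term k F (annihilation u G) us"
  proof (cases "k \<le> ?n")
    case True
    then have "?c * of_nat (Suc ?n - k) = wedge_coeff k (?n - k)"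
      using wedge_coeff_Suc_right[of k "?n - k"] by (simp add: Suc_diff_le)
    then show ?thesis using True by (simp add: fwedge_homogeneous_left[OF F(1)])
  next
    case False
    then show ?thesis by (simp add: fwedge_homogeneous_left[OF F(1)])
  qed
  have "fwedge F G (u # us) = ?c * wedge_term k F G (u # us)"
    using True by (simp add: fwedge_homogeneous_left[OF F(1)])
  also have "\<dots> = ?c * (of_nat k * wedge_term (k - 1) (annihilation u F) G us +
      of_nat (Suc ?n - k) * ((-1) ^ k * wedge_term k F (annihilation u G) us))"
    unfolding wedge_term_Cons[OF F(2) G True] ..
  finally show ?thesis unfolding left right distrib_left by (simp only: mult_ac)
qed

lemma annihilation_fwedge_degree_1:
  fixes X G :: "('n::finite) fock"
  assumes "homogeneous 1 X" "alternating X" "alternating G"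
  shows "annihilation u (fwedge X G) = (\<lambda>ws. X [u] * G ws + (-1) * fwedge X (annihilation u G) ws)"
proof
  fix ws
  have "homogeneous 0 (annihilation u X)" using assms(1) homogeneous_annihilation[of 0 X] by simp
  then show "annihilation u (fwedge X G) ws = X [u] * G ws + (-1) * fwedge X (annihilation u G) ws"
    using fwedge_Cons[OF assms] assms(3) by (simp add: annihilation_apply fwedge_degree_0_left)
qed

lemma fwedge_Nil_homogeneous_Suc: "homogeneous (Suc k) F \<Longrightarrow> fwedge F G [] = 0"
  by (simp add: fwedge_homogeneous_left)

lemma fwedge_degree_1_anticommute:
  fixes X Y G :: "('n::finite) fock"
  assumes X: "homogeneous 1 X" "alternating X" and Y: "homogeneous 1 Y" "alternating Y"
  shows "alternating G \<Longrightarrow> fwedge X (fwedge Y G) us = - fwedge Y (fwedge X G) us"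
proof (induction us arbitrary: G)
  case Nil
  then show ?case using X Y by (simp add: fwedge_Nil_homogeneous_Suc)
next
  case (Cons u us)
  have swap: "fwedge A (fwedge B G) (u # us) =
      A [u] * fwedge B G us - B [u] * fwedge A G us + fwedge A (fwedge B (annihilation u G)) us"
    if "homogeneous 1 A" "alternating A" "homogeneous 1 B" "alternating B" for A B
  proof -
    have "fwedge A (fwedge B G) (u # us) =
        A [u] * fwedge B G us + (-1) * fwedge A (annihilation u (fwedge B G)) us"
      using annihilation_fwedge_degree_1[OF that(1,2) alternating_fwedge, of u]
      by (simp add: fun_eq_iff annihilation_apply)
    also have "fwedge A (annihilation u (fwedge B G)) us =
        B [u] * fwedge A G us + (-1) * fwedge A (fwedge B (annihilation u G)) us"
      unfolding annihilation_fwedge_degree_1[OF that(3,4) Cons.prems] by (rule fwedge_lincomb_right)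
    finally show ?thesis by (simp add: algebra_simps)
  qed
  show ?case
    unfolding swap[OF X Y] swap[OF Y X] Cons.IH[OF alternating_annihilation[OF Cons.prems]] by simp
qed

lemma fwedge_degree_2_commute:
  fixes H X G :: "('n::finite) fock"
  assumes H: "homogeneous 2 H" "alternating H" and X: "homogeneous 1 X" "alternating X"
  shows "alternating G \<Longrightarrow> fwedge H (fwedge X G) us = fwedge X (fwedge H G) us"
proof (induction us arbitrary: G)
  case Nil
  then show ?case using H X by (simp add: fwedge_Nil_homogeneous_Suc numeral_2_eq_2)
next
  case (Cons u us)
  have Hu: "homogeneous 1 (annihilation u H)" "alternating (annihilation u H)"
    using H by (simp_all add: homogeneous_annihilation numeral_2_eq_2 alternating_annihilation)
  have H_Cons: "annihilation u (fwedge H K) =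
      (\<lambda>ws. 1 * fwedge (annihilation u H) K ws + 1 * fwedge H (annihilation u K) ws)"
    if "alternating K" for K
    using fwedge_Cons[OF H that] by (simp add: fun_eq_iff annihilation_apply)
  have "fwedge H (fwedge X G) (u # us) =
      fwedge (annihilation u H) (fwedge X G) us + fwedge H (annihilation u (fwedge X G)) us"
    using H_Cons[OF alternating_fwedge] by (simp add: fun_eq_iff annihilation_apply)
  also have "fwedge H (annihilation u (fwedge X G)) us =
      X [u] * fwedge H G us + (-1) * fwedge H (fwedge X (annihilation u G)) us"
    unfolding annihilation_fwedge_degree_1[OF X Cons.prems] by (rule fwedge_lincomb_right)
  also have "fwedge (annihilation u H) (fwedge X G) us = - fwedge X (fwedge (annihilation u H) G) us"
    by (rule fwedge_degree_1_anticommute[OF Hu X Cons.prems])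
  finally have left: "fwedge H (fwedge X G) (u # us) = - fwedge X (fwedge (annihilation u H) G) us +
      (X [u] * fwedge H G us + (-1) * fwedge H (fwedge X (annihilation u G)) us)" .
  have "fwedge X (fwedge H G) (u # us) =
      X [u] * fwedge H G us + (-1) * fwedge X (annihilation u (fwedge H G)) us"
    using annihilation_fwedge_degree_1[OF X alternating_fwedge, of u]
    by (simp add: fun_eq_iff annihilation_apply)
  also have "fwedge X (annihilation u (fwedge H G)) us =
      1 * fwedge X (fwedge (annihilation u H) G) us + 1 * fwedge X (fwedge H (annihilation u G)) us"
    unfolding H_Cons[OF Cons.prems] by (rule fwedge_lincomb_right)
  finally show ?case
    unfolding left Cons.IH[OF alternating_annihilation[OF Cons.prems]] by (simp add: algebra_simps)
qed

lemma alternating_fwedge_pow: "alternating (fwedge_pow (H :: ('n::finite) fock) r)"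
  by (cases r) (simp_all add: alternating_vacuum alternating_fwedge)

lemma homogeneous_fwedge_pow:
  "homogeneous 2 H \<Longrightarrow> homogeneous (2 * r) (fwedge_pow (H :: ('n::finite) fock) r)"
proof (induction r)
  case 0
  then show ?case by (simp add: homogeneous_vacuum)
next
  case (Suc r)
  then show ?case using homogeneous_fwedge[of 2 H "2 * r" "fwedge_pow H r"] by simp
qed

lemma annihilation_fwedge_pow:
  fixes H :: "('n::finite) fock"
  assumes H: "homogeneous 2 H" "alternating H"
  shows "fwedge_pow H (Suc r) (u # us) = of_nat (Suc r) * fwedge (annihilation u H) (fwedge_pow H r) us"
proof (induction r arbitrary: us)
  case 0
  show ?case
    using fwedge_Cons[OF H alternating_vacuum, of u us]
    by (simp add: homogeneous_0_annihilation[OF homogeneous_vacuum] fwedge_zero_right)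
next
  case (Suc r)
  have Hu: "homogeneous 1 (annihilation u H)" "alternating (annihilation u H)"
    using H by (simp_all add: homogeneous_annihilation numeral_2_eq_2 alternating_annihilation)
  have "fwedge_pow H (Suc (Suc r)) (u # us) = fwedge H (fwedge_pow H (Suc r)) (u # us)"
    by (simp only: fwedge_pow.simps)
  also have "\<dots> = fwedge (annihilation u H) (fwedge_pow H (Suc r)) us +
      fwedge H (annihilation u (fwedge_pow H (Suc r))) us"
    using fwedge_Cons[OF H alternating_fwedge_pow[of H "Suc r"], of u us]
    by (simp del: fwedge_pow.simps)
  also have "annihilation u (fwedge_pow H (Suc r)) =
      (\<lambda>ws. of_nat (Suc r) * fwedge (annihilation u H) (fwedge_pow H r) ws)"
    by (rule ext) (simp only: annihilation_apply[of u "fwedge_pow H (Suc r)"] Suc.IH)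
  also have "fwedge H (\<lambda>ws. of_nat (Suc r) * fwedge (annihilation u H) (fwedge_pow H r) ws) us =
      of_nat (Suc r) * fwedge (annihilation u H) (fwedge_pow H (Suc r)) us"
    using fwedge_degree_2_commute[OF H Hu alternating_fwedge_pow] by (simp add: fwedge_scale_right)
  finally show ?case by (simp add: algebra_simps)
qed

section \<open>Alternating antilinear forms vanish above the complex dimension\<close>

lemma linear_relation_of_card_less:
  fixes v :: "nat \<Rightarrow> real^'n"
  assumes "CARD('n) < N"
  obtains c where "\<exists>i<N. c i \<noteq> 0" "(\<Sum>i<N. c i *\<^sub>R v i) = 0"
proof (cases "inj_on v {..<N}")
  case False
  then obtain i j where ij: "i < N" "j < N" "i \<noteq> j" "v i = v j" unfolding inj_on_def by auto
  define c where "c l = (if l = i then 1 else 0) - (if l = j then 1 else 0 :: real)" for l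
  have "c l *\<^sub>R v l = (if l = i then v l else 0) - (if l = j then v l else 0)" for l
    by (simp add: c_def scaleR_left_diff_distrib)
  then have "(\<Sum>l<N. c l *\<^sub>R v l) = v i - v j"
    using ij by (simp add: sum_subtractf)
  then show ?thesis using ij by (intro that[of c]) (auto simp: c_def)
next
  case True
  have "\<not> independent (v ` {..<N})"
    using independent_bound[of "v ` {..<N}"] card_image[OF True] assms by auto
  then obtain u where u: "\<exists>x\<in>v ` {..<N}. u x \<noteq> 0" "(\<Sum>x\<in>v ` {..<N}. u x *\<^sub>R x) = 0"
    using dependent_finite[of "v ` {..<N}"] by blast
  then show ?thesis
    by (intro that[of "\<lambda>i. u (v i)"]) (auto simp: sum.reindex[OF True])
qed

lemma real_relation_with_J:
  fixes ws :: "(real^'n) list"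
  assumes "CARD('n) < 2 * length ws"
  obtains a b k where "k < length ws" "a k \<noteq> 0 \<or> b k \<noteq> 0"
    "(\<Sum>j<length ws. a j *\<^sub>R ws ! j + b j *\<^sub>R J (ws ! j)) = 0"
proof -
  let ?L = "length ws"
  define v where "v i = (if i < ?L then ws ! i else J (ws ! (i - ?L)))" for i
  obtain c where c: "\<exists>i<2 * ?L. c i \<noteq> 0" "(\<Sum>i<2 * ?L. c i *\<^sub>R v i) = 0"
    using linear_relation_of_card_less[OF assms] by blast
  have split: "{..<2 * ?L} = {..<?L} \<union> (\<lambda>j. ?L + j) ` {..<?L}"
  proof (rule set_eqI)
    fix x
    show "x \<in> {..<2 * ?L} \<longleftrightarrow> x \<in> {..<?L} \<union> (\<lambda>j. ?L + j) ` {..<?L}"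
      by (cases "x < ?L") (auto intro: image_eqI[of _ _ "x - ?L"])
  qed
  have "(\<Sum>i<2 * ?L. c i *\<^sub>R v i) =
      (\<Sum>i<?L. c i *\<^sub>R v i) + (\<Sum>i\<in>(\<lambda>j. ?L + j) ` {..<?L}. c i *\<^sub>R v i)"
    unfolding split by (rule sum.union_disjoint) auto
  also have "(\<Sum>i\<in>(\<lambda>j. ?L + j) ` {..<?L}. c i *\<^sub>R v i) = (\<Sum>j<?L. c (?L + j) *\<^sub>R J (ws ! j))"
    by (simp add: sum.reindex v_def)
  also have "(\<Sum>i<?L. c i *\<^sub>R v i) = (\<Sum>j<?L. c j *\<^sub>R ws ! j)"
    by (simp add: v_def)
  finally have "(\<Sum>i<2 * ?L. c i *\<^sub>R v i) =
      (\<Sum>j<?L. c j *\<^sub>R ws ! j) + (\<Sum>j<?L. c (?L + j) *\<^sub>R J (ws ! j))" .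
  then have "(\<Sum>j<?L. c j *\<^sub>R ws ! j + c (?L + j) *\<^sub>R J (ws ! j)) = 0"
    using c(2) by (simp add: sum.distrib)
  moreover obtain k where "k < ?L" "c k \<noteq> 0 \<or> c (?L + k) \<noteq> 0"
    using c(1) by (metis add_diff_inverse_nat mult_2 nat_add_left_cancel_less)
  ultimately show ?thesis by (intro that) auto
qed

lemma sum_Cons_additive:
  assumes add: "\<And>a b ws. F ((a + b) # ws) = F (a # ws) + F (b # ws)"
    and zero: "\<And>ws. F (0 # ws) = 0"
  shows "F ((\<Sum>j\<in>S. x j) # ws) = (\<Sum>j\<in>S. F (x j # ws))"
  by (induction S rule: infinite_finite_induct) (simp_all add: zero add)

lemma Cons_scaleR_add_J:
  assumes add: "\<And>a b ws. F ((a + b) # ws) = F (a # ws) + F (b # ws)"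
    and scale: "\<And>c a ws. F ((c *\<^sub>R a) # ws) = complex_of_real c * F (a # ws)"
    and J: "\<And>a ws. F (J a # ws) = - \<i> * F (a # ws)"
  shows "F ((a *\<^sub>R x + b *\<^sub>R J x) # ws) = Complex a (- b) * F (x # ws)"
proof -
  have "F ((a *\<^sub>R x + b *\<^sub>R J x) # ws) = of_real a * F (x # ws) + of_real b * (- \<i> * F (x # ws))"
    by (simp only: add scale J)
  then show ?thesis by (simp add: Complex_eq algebra_simps)
qed

lemma nth_mem_remove_nth:
  assumes "j < length ws" "k < length ws" "j \<noteq> k"
  shows "ws ! j \<in> set (take k ws @ drop (Suc k) ws)"
proof -
  let ?i = "if j < k then j else j - 1"
  have "ws ! j = (take k ws @ drop (Suc k) ws) ! ?i" "?i < length (take k ws @ drop (Suc k) ws)"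
    using assms by (auto simp: nth_append min_def)
  then show ?thesis by (metis nth_mem)
qed

text \<open>Substituting a complex-linear relation among the arguments for the k-th one kills every
  other term, since its argument then appears twice.\<close>

lemma alternating_antilinear_vanishes:
  fixes F :: "('n::finite) fock"
  assumes card: "CARD('n) = 2 * m" and F: "alternating F"
    and add: "\<And>a b ws. F ((a + b) # ws) = F (a # ws) + F (b # ws)"
    and scale: "\<And>c a ws. F ((c *\<^sub>R a) # ws) = complex_of_real c * F (a # ws)"
    and J: "\<And>a ws. F (J a # ws) = - \<i> * F (a # ws)"
    and len: "m < length ws"
  shows "F ws = 0"
proof -
  have "CARD('n) < 2 * length ws" using card len by simp
  then obtain a b k where k: "k < length ws" "a k \<noteq> 0 \<or> b k \<noteq> 0"
    and rel: "(\<Sum>j<length ws. a j *\<^sub>R ws ! j + b j *\<^sub>R J (ws ! j)) = 0"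
    by (rule real_relation_with_J)
  define rest where "rest = take k ws @ drop (Suc k) ws"
  have zero: "F (0 # vs) = 0" for vs using scale[of 0 0 vs] by simp
  have repeated: "F (ws ! j # rest) = 0" if "j < length ws" "j \<noteq> k" for j
    using that k(1) unfolding rest_def by (intro alternating_repeated[OF F] nth_mem_remove_nth)
  have "0 = F ((\<Sum>j<length ws. a j *\<^sub>R ws ! j + b j *\<^sub>R J (ws ! j)) # rest)"
    using rel zero by simp
  also have "\<dots> = (\<Sum>j<length ws. Complex (a j) (- b j) * F (ws ! j # rest))"
    by (simp only: sum_Cons_additive[OF add zero] Cons_scaleR_add_J[OF add scale J])
  also have "\<dots> = Complex (a k) (- b k) * F (ws ! k # rest)"
    using k(1) repeated by (simp add: sum.remove[of _ k])
  finally have "Complex (a k) (- b k) * F (ws ! k # rest) = 0" by simp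
  moreover have "Complex (a k) (- b k) \<noteq> 0" using k(2) by (simp add: complex_eq_iff)
  ultimately have "F (ws ! k # rest) = 0" by simp
  moreover have "F (take k rest @ ws ! k # drop k rest) = (-1) ^ k * F (ws ! k # rest)"
    using k(1) unfolding rest_def by (intro alternating_insert[OF F]) simp
  moreover have "take k rest @ ws ! k # drop k rest = ws"
    using k(1) unfolding rest_def by (simp add: id_take_nth_drop[symmetric] min_def)
  ultimately show ?thesis by simp
qed

section \<open>Complex structures and antilinear skew operators\<close>

locale complex_structure =
  fixes J :: "real^('n::finite) \<Rightarrow> real^'n"
  assumes is_complex_structure: "is_complex_structure J"
begin

lemma linear_J: "linear J"
  using is_complex_structure by (simp add: is_complex_structure_def)

lemma J_J [simp]: "J (J v) = - v"
  using is_complex_structure by (simp add: is_complex_structure_def)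

lemma inner_J_J [simp]: "J u \<bullet> J v = u \<bullet> v"
  using is_complex_structure by (simp add: is_complex_structure_def)

lemma inner_J_left: "J u \<bullet> v = - (u \<bullet> J v)"
  using inner_J_J[of "J u" v] by simp

lemmas J_add [simp] = linear_add[OF linear_J]
  and J_scaleR [simp] = linear_cmul[OF linear_J]
  and J_diff [simp] = linear_diff[OF linear_J]
  and J_neg [simp] = linear_neg[OF linear_J]

lemma hip_add_right: "hip J u (v + w) = hip J u v + hip J u w"
  by (simp add: hip_def complex_eq_iff inner_add_right)

lemma hip_scaleR_right: "hip J u (c *\<^sub>R v) = complex_of_real c * hip J u v"
  by (simp add: hip_def complex_eq_iff)

lemma hip_J_right: "hip J u (J v) = \<i> * hip J u v"
  by (simp add: hip_def complex_eq_iff inner_J_left inner_commute[of u "J v"])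

lemma hip_cmul_right: "hip J u (cmul J c v) = c * hip J u v"
  by (simp add: cmul_def hip_add_right hip_scaleR_right hip_J_right complex_eq_iff)

lemma hip_sum_right: "hip J u (\<Sum>i\<in>S. f i) = (\<Sum>i\<in>S. hip J u (f i))"
proof (induction S rule: infinite_finite_induct)
  case (insert x F)
  then show ?case by (simp add: hip_add_right)
qed (simp_all add: hip_def zero_complex.code)

lemma hip_swap: "hip J v u = cnj (hip J u v)"
  using inner_J_left[of v u] by (simp add: hip_def complex_eq_iff inner_commute)

lemma fwedge_vec1_add: "fwedge (vec1 J (a + b)) G us = fwedge (vec1 J a) G us + fwedge (vec1 J b) G us"
  using fwedge_lincomb_left[of 1 "vec1 J a" 1 "vec1 J b" G us]
  by (simp add: vec1_def hip_add_right if_distrib cong: if_cong)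

lemma fwedge_vec1_scaleR: "fwedge (vec1 J (c *\<^sub>R a)) G us = of_real c * fwedge (vec1 J a) G us"
  using fwedge_scale_left[of "of_real c" "vec1 J a" G us]
  by (simp add: vec1_def hip_scaleR_right if_distrib cong: if_cong)

lemma fwedge_vec1_J: "fwedge (vec1 J (J a)) G us = \<i> * fwedge (vec1 J a) G us"
  using fwedge_scale_left[of \<i> "vec1 J a" G us]
  by (simp add: vec1_def hip_J_right if_distrib cong: if_cong)

lemma orthonormal_cbasis_expansion:
  assumes B: "orthonormal_cbasis J m e"
  shows "v = (\<Sum>i<m. cmul J (hip J (e i) v) (e i))"
proof -
  obtain c where c: "v = (\<Sum>i<m. cmul J (c i) (e i))"
    using B unfolding orthonormal_cbasis_def by blast
  have "hip J (e k) v = c k" if "k < m" for k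
  proof -
    have "hip J (e k) v = (\<Sum>i<m. c i * hip J (e k) (e i))"
      unfolding c hip_sum_right hip_cmul_right ..
    also have "\<dots> = (\<Sum>i<m. if i = k then c i else 0)"
      using B that unfolding orthonormal_cbasis_def by (intro sum.cong) auto
    finally show ?thesis using that by simp
  qed
  then have "(\<Sum>i<m. cmul J (hip J (e i) v) (e i)) = (\<Sum>i<m. cmul J (c i) (e i))" by simp
  with c show ?thesis by simp
qed

lemma orthonormal_cbasis_parseval:
  assumes "orthonormal_cbasis J m e"
  shows "hip J u w = (\<Sum>i<m. hip J u (e i) * hip J (e i) w)"
  by (subst orthonormal_cbasis_expansion[OF assms, of w])
    (simp add: hip_sum_right hip_cmul_right mult.commute)

end

lemma annihilation_fwedge_vec1_vec1:
  "annihilation u (fwedge (vec1 J a) (vec1 J b)) ws =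
    hip J u a * vec1 J b ws - vec1 J a ws * hip J u b"
proof -
  have "homogeneous 0 (annihilation u (vec1 J b))"
    using homogeneous_annihilation[OF homogeneous_vec1[unfolded One_nat_def]] .
  then have "fwedge (vec1 J a) (annihilation u (vec1 J b)) ws = vec1 J a ws * annihilation u (vec1 J b) []"
    by (rule fwedge_degree_0_right[OF _ alternating_vec1])
  moreover have "annihilation u (fwedge (vec1 J a) (vec1 J b)) ws =
      vec1 J a [u] * vec1 J b ws + (-1) * fwedge (vec1 J a) (annihilation u (vec1 J b)) ws"
    by (simp only: annihilation_fwedge_degree_1[OF homogeneous_vec1 alternating_vec1 alternating_vec1])
  ultimately show ?thesis by (simp add: annihilation_apply vec1_def)
qed

lemma homogeneous_H_T: "homogeneous 2 (H_T J m e T)"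
proof -
  have "homogeneous (1 + 1) (fwedge (vec1 J (e i)) (vec1 J (e j)))" for i j
    by (rule homogeneous_fwedge[OF homogeneous_vec1 homogeneous_vec1])
  then show ?thesis by (simp add: homogeneous_def H_T_def)
qed

lemma alternating_H_T:
  fixes J :: "real^'n \<Rightarrow> real^'n"
  shows "alternating (H_T J m e T)"
  unfolding alternating_def
proof (intro allI impI)
  fix ws :: "(real^'n) list" and \<sigma> assume "\<sigma> permutes {..<length ws}"
  then have "fwedge (vec1 J (e i)) (vec1 J (e j)) (permute_list \<sigma> ws) =
      of_int (sign \<sigma>) * fwedge (vec1 J (e i)) (vec1 J (e j)) ws" for i j
    using alternating_fwedge unfolding alternating_def by blast
  then show "H_T J m e T (permute_list \<sigma> ws) = of_int (sign \<sigma>) * H_T J m e T ws"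
    by (simp add: H_T_def sum_distrib_left mult.left_commute)
qed

locale skew_antilinear = complex_structure +
  fixes T :: "real^'n \<Rightarrow> real^'n"
  assumes linear_T: "linear T"
    and T_J: "T (J v) = - J (T v)"
    and inner_T_skew: "T u \<bullet> v = - (u \<bullet> T v)"
begin

lemma T_cmul: "T (cmul J c v) = cmul J (cnj c) (T v)"
  by (simp add: cmul_def linear_add[OF linear_T] linear_cmul[OF linear_T] T_J)

lemma hip_T_skew: "hip J u (T v) = - hip J v (T u)"
proof -
  have "J u \<bullet> T v = - (v \<bullet> T (J u))" using inner_T_skew[of v "J u"] by (simp add: inner_commute)
  also have "\<dots> = - (J v \<bullet> T u)" by (simp add: T_J inner_J_left)
  finally show ?thesis using inner_T_skew[of v u] by (simp add: hip_def complex_eq_iff inner_commute)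
qed

lemma hip_T_expansion:
  assumes "orthonormal_cbasis J m e"
  shows "(\<Sum>j<m. hip J v (e j) * hip J u (T (e j))) = hip J u (T v)"
proof -
  have "T v = (\<Sum>j<m. cmul J (hip J v (e j)) (T (e j)))"
    by (subst orthonormal_cbasis_expansion[OF assms, of v])
      (simp add: linear_sum[OF linear_T] T_cmul hip_swap[of v])
  then show ?thesis by (simp add: hip_sum_right hip_cmul_right)
qed

lemma sum_sum_hip_T_basis:
  assumes B: "orthonormal_cbasis J m e"
  shows "(\<Sum>i<m. \<Sum>j<m. hip J (e i) (T (e j)) * (hip J x (e i) * hip J y (e j))) = hip J x (T y)"
proof -
  have "(\<Sum>i<m. \<Sum>j<m. hip J (e i) (T (e j)) * (hip J x (e i) * hip J y (e j))) =
      (\<Sum>j<m. hip J y (e j) * (\<Sum>i<m. hip J x (e i) * hip J (e i) (T (e j))))"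
    by (subst sum.swap) (simp add: sum_distrib_left mult_ac)
  also have "\<dots> = (\<Sum>j<m. hip J y (e j) * hip J x (T (e j)))"
    by (simp only: orthonormal_cbasis_parseval[OF B, symmetric])
  finally show ?thesis by (simp add: hip_T_expansion[OF B])
qed

text \<open>H_T counts every pair twice, hence the factor 2, which the coefficients 1/(2^r r!) of the
  Gaussian compensate.\<close>

lemma annihilation_H_T:
  assumes B: "orthonormal_cbasis J m e"
  shows "annihilation u (H_T J m e T) = (\<lambda>ws. - 2 * vec1 J (T u) ws)"
proof
  fix ws
  let ?c = "\<lambda>i j. hip J (e i) (T (e j))"
  have "annihilation u (H_T J m e T) ws =
      (\<Sum>i<m. \<Sum>j<m. ?c i j * annihilation u (fwedge (vec1 J (e i)) (vec1 J (e j))) ws)"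
    by (simp add: H_T_def annihilation_def)
  also have "\<dots> = (\<Sum>i<m. \<Sum>j<m. ?c i j *
      (hip J u (e i) * vec1 J (e j) ws - vec1 J (e i) ws * hip J u (e j)))"
    by (simp only: annihilation_fwedge_vec1_vec1)
  also have "\<dots> = - 2 * vec1 J (T u) ws"
  proof (cases "length ws = 1")
    case True
    then obtain x where x: "ws = [x]" by (auto simp: length_Suc_conv)
    have "(\<Sum>i<m. \<Sum>j<m. ?c i j * (hip J u (e i) * vec1 J (e j) ws - vec1 J (e i) ws * hip J u (e j))) =
        (\<Sum>i<m. \<Sum>j<m. ?c i j * (hip J u (e i) * hip J x (e j))) -
        (\<Sum>i<m. \<Sum>j<m. ?c i j * (hip J x (e i) * hip J u (e j)))"
      by (simp add: x vec1_def right_diff_distrib sum_subtractf)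
    also have "\<dots> = - 2 * hip J x (T u)" by (simp add: sum_sum_hip_T_basis[OF B] hip_T_skew[of u x])
    finally show ?thesis by (simp add: x vec1_def)
  next
    case False
    then show ?thesis by (simp add: vec1_def)
  qed
  finally show "annihilation u (H_T J m e T) ws = - 2 * vec1 J (T u) ws" .
qed

end

section \<open>The Gaussian\<close>

definition gaussian_coeff :: "nat \<Rightarrow> complex" where
  "gaussian_coeff r = complex_of_real (1 / (2 ^ r * fact r))"

lemma gaussian_coeff_Suc: "gaussian_coeff (Suc r) * (2 * of_nat (Suc r)) = gaussian_coeff r"
proof -
  have "1 / (2 ^ Suc r * fact (Suc r)) * (2 * real (Suc r)) = 1 / (2 ^ r * fact r)"
    by (simp del: of_nat_Suc)
  then show ?thesis
    by (metis gaussian_coeff_def of_real_mult of_real_of_nat_eq of_real_numeral)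
qed

locale gaussian_setting = skew_antilinear +
  fixes m :: nat and e :: "nat \<Rightarrow> real^'n"
  assumes card: "CARD('n) = 2 * m"
    and basis: "orthonormal_cbasis J m e"
begin

lemma fwedge_pow_H_T_Cons:
  "fwedge_pow (H_T J m e T) (Suc r) (u # ws) =
    - (2 * of_nat (Suc r)) * fwedge (vec1 J (T u)) (fwedge_pow (H_T J m e T) r) ws"
proof -
  have "fwedge_pow (H_T J m e T) (Suc r) (u # ws) =
      of_nat (Suc r) * fwedge (annihilation u (H_T J m e T)) (fwedge_pow (H_T J m e T) r) ws"
    by (rule annihilation_fwedge_pow[OF homogeneous_H_T alternating_H_T])
  also have "fwedge (annihilation u (H_T J m e T)) (fwedge_pow (H_T J m e T) r) ws =
      - 2 * fwedge (vec1 J (T u)) (fwedge_pow (H_T J m e T) r) ws"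
    unfolding annihilation_H_T[OF basis] by (rule fwedge_scale_left)
  finally show ?thesis by (simp add: algebra_simps del: of_nat_Suc)
qed

lemma fwedge_pow_H_T_vanishes:
  assumes "m < 2 * r"
  shows "fwedge_pow (H_T J m e T) r ws = 0"
proof (cases "length ws = 2 * r")
  case False
  have "homogeneous (2 * r) (fwedge_pow (H_T J m e T) r)"
    by (rule homogeneous_fwedge_pow[OF homogeneous_H_T])
  with False show ?thesis by (simp add: homogeneous_def)
next
  case True
  obtain r' where r: "r = Suc r'" using assms by (cases r) auto
  show ?thesis
  proof (rule alternating_antilinear_vanishes[OF card alternating_fwedge_pow])
    show "fwedge_pow (H_T J m e T) r ((a + b) # vs) =
        fwedge_pow (H_T J m e T) r (a # vs) + fwedge_pow (H_T J m e T) r (b # vs)" for a b vs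
      unfolding r fwedge_pow_H_T_Cons by (simp add: linear_add[OF linear_T] fwedge_vec1_add algebra_simps)
    show "fwedge_pow (H_T J m e T) r ((c *\<^sub>R a) # vs) =
        complex_of_real c * fwedge_pow (H_T J m e T) r (a # vs)" for c a vs
      unfolding r fwedge_pow_H_T_Cons by (simp add: linear_cmul[OF linear_T] fwedge_vec1_scaleR)
    show "fwedge_pow (H_T J m e T) r (J a # vs) = - \<i> * fwedge_pow (H_T J m e T) r (a # vs)" for a vs
      unfolding r fwedge_pow_H_T_Cons using fwedge_vec1_scaleR[of "-1" "J (T a)"]
      by (simp add: T_J fwedge_vec1_J)
    show "m < length ws" using True assms by simp
  qed
qed

lemma gaussian_eq_sum:
  "gaussian J m e T us = (\<Sum>r\<le>m div 2. gaussian_coeff r * fwedge_pow (H_T J m e T) r us)"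
proof -
  have "{r. 2 * r \<le> m} = {..m div 2}" by auto
  then show ?thesis by (simp add: gaussian_def gaussian_coeff_def)
qed

text \<open>The truncation of the exponential series at 2r \<le> m is harmless because the first omitted
  power of H_T vanishes.\<close>

lemma annihilation_gaussian:
  "gaussian J m e T (w # us) = - fwedge (vec1 J (T w)) (gaussian J m e T) us"
proof -
  let ?M = "m div 2" and ?P = "fwedge_pow (H_T J m e T)"
  define A where "A r = fwedge (vec1 J (T w)) (?P r) us" for r
  have "?P (Suc ?M) (w # us) = 0" by (rule fwedge_pow_H_T_vanishes) simp
  then have "- (2 * of_nat (Suc ?M)) * A ?M = 0" by (simp only: fwedge_pow_H_T_Cons A_def)
  then have last: "A ?M = 0" by (simp only: mult_eq_0_iff neg_equal_0_iff_equal of_nat_eq_0_iff) simp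
  have "gaussian J m e T (w # us) = (\<Sum>r<Suc ?M. gaussian_coeff r * ?P r (w # us))"
    by (simp add: gaussian_eq_sum lessThan_Suc_atMost)
  also have "\<dots> = (\<Sum>r<?M. gaussian_coeff (Suc r) * ?P (Suc r) (w # us))"
    by (simp only: sum.lessThan_Suc_shift) (simp add: vacuum_def)
  also have "\<dots> = (\<Sum>r<?M. - (gaussian_coeff (Suc r) * (2 * of_nat (Suc r)) * A r))"
    unfolding fwedge_pow_H_T_Cons A_def by (simp only: mult_ac mult_minus_left mult_minus_right)
  also have "\<dots> = (\<Sum>r<?M. - (gaussian_coeff r * A r))"
    by (simp only: gaussian_coeff_Suc)
  also have "\<dots> = - (\<Sum>r<Suc ?M. gaussian_coeff r * A r)"
    by (simp add: last sum_negf)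
  also have "\<dots> = - fwedge (vec1 J (T w)) (gaussian J m e T) us"
    unfolding gaussian_eq_sum[abs_def] fwedge_sum_right fwedge_scale_right
    by (simp add: A_def lessThan_Suc_atMost)
  finally show ?thesis .
qed

end

section \<open>Elements of SO_*(V)\<close>

locale SO_star_element = complex_structure +
  fixes g :: "real^'n \<Rightarrow> real^'n"
  assumes SO_star: "g \<in> SO_star J"
begin

lemma orthogonal_g: "orthogonal_transformation g"
  using SO_star by (simp add: SO_star_def SO_space_def)

lemma linear_g: "linear g"
  using orthogonal_g by (simp add: orthogonal_transformation_def)

lemma bij_pg: "bij (pg J g)"
  using SO_star by (simp add: SO_star_def)

lemmas g_add [simp] = linear_add[OF linear_g]
  and g_scaleR [simp] = linear_cmul[OF linear_g]
  and g_neg [simp] = linear_neg[OF linear_g]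

lemma linear_pg: "linear (pg J g)"
  by (simp add: linear_iff pg_def algebra_simps)

lemma linear_qg: "linear (qg J g)"
  by (simp add: linear_iff qg_def algebra_simps)

lemma pg_J: "pg J g (J v) = J (pg J g v)"
  by (simp add: pg_def algebra_simps)

lemma qg_J: "qg J g (J v) = - J (qg J g v)"
  by (simp add: qg_def algebra_simps)

lemma inv_pg_J: "inv (pg J g) (J v) = J (inv (pg J g) v)"
  using bij_pg by (metis bij_inv_eq_iff pg_J)

lemma linear_Tg: "linear (Tg J g)"
  unfolding Tg_def
  using linear_compose[OF inj_linear_imp_inv_linear[OF linear_pg bij_is_inj[OF bij_pg]] linear_qg] .

lemma Tg_J: "Tg J g (J v) = - J (Tg J g v)"
  by (simp add: Tg_def inv_pg_J qg_J)

lemma Tg_pg: "Tg J g (pg J g v) = qg J g v"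
  using bij_pg by (simp add: Tg_def bij_is_inj)

lemma inner_qg_pg: "qg J g u \<bullet> pg J g v = - (pg J g u \<bullet> qg J g v)"
  using orthogonal_g
  by (simp add: pg_def qg_def orthogonal_transformation_def algebra_simps)

lemma inner_Tg_skew: "Tg J g u \<bullet> v = - (u \<bullet> Tg J g v)"
proof -
  have "Tg J g (pg J g x) \<bullet> pg J g y = - (pg J g x \<bullet> Tg J g (pg J g y))" for x y
    by (simp add: Tg_pg inner_qg_pg)
  then show ?thesis using bij_pg by (metis bij_inv_eq_iff)
qed

sublocale skew_antilinear J "Tg J g"
  by (intro skew_antilinear.intro skew_antilinear_axioms.intro complex_structure_axioms
      linear_Tg Tg_J inner_Tg_skew)

lemma g_add_J_g_J: "g v + J (g (J v)) = 2 *\<^sub>R qg J g v"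
  by (simp add: qg_def)

lemma Tg_g_add_J_Tg_g_J: "Tg J g (g v) + J (Tg J g (g (J v))) = 2 *\<^sub>R qg J g v"
proof -
  have "Tg J g (g v) + J (Tg J g (g (J v))) = Tg J g (2 *\<^sub>R pg J g v)"
    by (simp add: pg_def linear_diff[OF linear_Tg] linear_cmul[OF linear_Tg] Tg_J)
  then show ?thesis by (simp add: linear_cmul[OF linear_Tg] Tg_pg)
qed

end

lemma aK_apply:
  "aK J K w F us = (1 / 2) * ((fwedge (vec1 J w) F us + \<i> * fwedge (vec1 J (K w)) F us) +
    (F (w # us) + \<i> * F (K w # us)))"
  by (simp add: aK_def fock_smult_def fock_add_def field_op_def creation_def annihilation_def
      algebra_simps)

theorem lemma4p6:
  fixes J g :: "real^'n \<Rightarrow> real^'n" and m :: nat and e :: "nat \<Rightarrow> real^'n"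
  assumes "CARD('n) = 2 * m"
    and "is_complex_structure J"
    and "orthonormal_cbasis J m e"
    and "g \<in> SO_star J"
  shows "\<forall>v. aK J (g \<circ> J \<circ> inv g) (g v) (gaussian J m e (Tg J g)) = fock_zero"
proof
  fix v
  interpret SO_star_element J g
    using assms(2,4) by unfold_locales
  interpret gaussian_setting J "Tg J g" m e
    using assms(1,3) by unfold_locales
  let ?f = "gaussian J m e (Tg J g)" and ?q = "qg J g v"
  have inv_g: "inv g (g v) = v"
    using orthogonal_transformation_inj[OF orthogonal_g] by (simp add: inv_f_f)
  have creation: "fwedge (vec1 J (g v)) ?f us + \<i> * fwedge (vec1 J (g (J v))) ?f us =
      fwedge (vec1 J (2 *\<^sub>R ?q)) ?f us" for us
    by (simp add: fwedge_vec1_add fwedge_vec1_J flip: g_add_J_g_J)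
  have contraction: "?f (g v # us) + \<i> * ?f (g (J v) # us) = - fwedge (vec1 J (2 *\<^sub>R ?q)) ?f us"
    for us
    by (simp add: annihilation_gaussian fwedge_vec1_add fwedge_vec1_J algebra_simps
        flip: Tg_g_add_J_Tg_g_J)
  show "aK J (g \<circ> J \<circ> inv g) (g v) ?f = fock_zero"
  proof
    fix us
    show "aK J (g \<circ> J \<circ> inv g) (g v) ?f us = fock_zero us"
      unfolding aK_apply o_apply inv_g creation contraction by (simp add: fock_zero_def)
  qed
qed

end
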